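(* Let $m\ge 2$ and $d\ge 1$ be integers with $n=md\ge 3$, and let $a,c>0$. Let $\Gamma'$ be the non-complete wheel $(n,m)$-$W$: its vertex set is $\{1,\dots,n+1\}$; for $i=1,\dots,n$ the vertices $i$ and $i+1$ (indices of the cycle taken modulo $n$, so $n$ is joined to $1$) are joined by an edge of conductance $c$; and the vertex $n+1$ is joined to each of the vertices $1+(k-1)d$, $k=1,\dots,m$, by an edge of conductance $a$. Put $q=\frac{ad}{2c}+1$. Then the Kirchhoff index of $\Gamma'$ is $$K(\Gamma')=-\frac{1}{2c}\,\frac{n+1}{T_m(q)-1}\left[\left(\frac{an}{6c}-dn+d^2\right)U_{m-1}(q)+\left(\frac{2cd}{a}+\frac{dn}{3}\right)\bigl(V_{m-1}(q)-1\bigr)\right]+\frac{d}{a}+\frac{dn(n+1)}{6c}-\frac{(d^2-1)n}{12c}.$$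
   Context: The (combinatorial) Laplacian of a network with vertex set $\{1,\dots,N\}$ and conductances $c_{ij}>0$ on its edges is the $N\times N$ matrix $L$ with $L_{ii}=\sum_k c_{ik}$ and $L_{ij}=-c_{ij}$ for $i\ne j$ ($c_{ij}=0$ if $\{i,j\}$ is not an edge). Let $G'$ be the group inverse of the Laplacian of $\Gamma'$. The effective resistance between vertices $i,j$ is $R(i,j)=G'_{ii}+G'_{jj}-2G'_{ij}$, and the Kirchhoff index is $K(\Gamma')=\frac12\sum_{i,j}R(i,j)$ (equivalently $(n+1)\,\mathrm{trace}(G')$). $T_k$ and $U_k$ denote the Chebyshev polynomials of the first and second kind ($T_0=1$, $T_1=x$, $U_0=1$, $U_1=2x$, both satisfying $p_{k+1}=2xp_k-p_{k-1}$), and $V_k$ denotes the Chebyshev polynomials of the third kind: $V_0=1$, $V_1=2x-1$, $V_{k+1}=2xV_k-V_{k-1}$. *)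

theory Defs
  imports Complex_Main
begin

fun chebT :: "nat \<Rightarrow> real \<Rightarrow> real" where
  "chebT 0 x = 1"
| "chebT (Suc 0) x = x"
| "chebT (Suc (Suc k)) x = 2 * x * chebT (Suc k) x - chebT k x"

fun chebU :: "nat \<Rightarrow> real \<Rightarrow> real" where
  "chebU 0 x = 1"
| "chebU (Suc 0) x = 2 * x"
| "chebU (Suc (Suc k)) x = 2 * x * chebU (Suc k) x - chebU k x"

fun chebV :: "nat \<Rightarrow> real \<Rightarrow> real" where
  "chebV 0 x = 1"
| "chebV (Suc 0) x = 2 * x - 1"
| "chebV (Suc (Suc k)) x = 2 * x * chebV (Suc k) x - chebV k x"

definition mat_mult :: "nat \<Rightarrow> (nat \<Rightarrow> nat \<Rightarrow> real) \<Rightarrow> (nat \<Rightarrow> nat \<Rightarrow> real) \<Rightarrow> nat \<Rightarrow> nat \<Rightarrow> real" where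
  "mat_mult N A B i j = (\<Sum>k\<in>{1..N}. A i k * B k j)"

text \<open>Combinatorial Laplacian of a network on {1..N} with conductance function cond
  (cond i j = 0 if {i,j} is not an edge).\<close>
definition laplacian :: "nat \<Rightarrow> (nat \<Rightarrow> nat \<Rightarrow> real) \<Rightarrow> nat \<Rightarrow> nat \<Rightarrow> real" where
  "laplacian N cond i j =
     (if i \<in> {1..N} \<and> j \<in> {1..N} then
        (if i = j then (\<Sum>k\<in>{1..N} - {i}. cond i k) else - cond i j)
      else 0)"

definition is_group_inverse :: "nat \<Rightarrow> (nat \<Rightarrow> nat \<Rightarrow> real) \<Rightarrow> (nat \<Rightarrow> nat \<Rightarrow> real) \<Rightarrow> bool" where
  "is_group_inverse N L G \<longleftrightarrow>
     (\<forall>i j. \<not> (i \<in> {1..N} \<and> j \<in> {1..N}) \<longrightarrow> G i j = 0) \<and>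
     (\<forall>i\<in>{1..N}. \<forall>j\<in>{1..N}.
        mat_mult N (mat_mult N L G) L i j = L i j \<and>
        mat_mult N (mat_mult N G L) G i j = G i j \<and>
        mat_mult N L G i j = mat_mult N G L i j)"

definition group_inverse :: "nat \<Rightarrow> (nat \<Rightarrow> nat \<Rightarrow> real) \<Rightarrow> nat \<Rightarrow> nat \<Rightarrow> real" where
  "group_inverse N L = (THE G. is_group_inverse N L G)"

definition eff_resistance :: "nat \<Rightarrow> (nat \<Rightarrow> nat \<Rightarrow> real) \<Rightarrow> nat \<Rightarrow> nat \<Rightarrow> real" where
  "eff_resistance N cond i j =
     (let G = group_inverse N (laplacian N cond) in G i i + G j j - 2 * G i j)"

definition kirchhoff_index :: "nat \<Rightarrow> (nat \<Rightarrow> nat \<Rightarrow> real) \<Rightarrow> real" where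
  "kirchhoff_index N cond = (1/2) * (\<Sum>i\<in>{1..N}. \<Sum>j\<in>{1..N}. eff_resistance N cond i j)"

definition wheel_cond :: "nat \<Rightarrow> nat \<Rightarrow> real \<Rightarrow> real \<Rightarrow> nat \<Rightarrow> nat \<Rightarrow> real" where
  "wheel_cond m d a c i j =
     (let n = m * d;
          cyc = (\<lambda>i j. i \<in> {1..n} \<and> j \<in> {1..n} \<and>
                   (j = i + 1 \<or> i = j + 1 \<or> (i = n \<and> j = 1) \<or> (i = 1 \<and> j = n)));
          spokes = {1 + (k - 1) * d | k. k \<in> {1..m}}
      in if cyc i j then c
         else if (i = n + 1 \<and> j \<in> spokes) \<or> (j = n + 1 \<and> i \<in> spokes) then a
         else 0)"

end

(* Ground the hub. If M is the inverse of the Laplacian with the row and column of the hub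
   removed, then centring M gives the group inverse of the Laplacian, and the Kirchhoff index
   is (n + 1) tr M - sum M, where sum M is the total rim potential for unit currents entering
   at every rim vertex.

   The grounded Laplacian commutes with rotations of the rim by d, so M is determined by its
   columns for a unit source at an offset s < d of the first block. That potential is linear
   between consecutive spokes, up to the Green function of the grounded path in the source
   block, and its values y(j) at the spokes solve 2 q y(j) - y(j - 1) - y(j + 1) = source on
   the cycle of length m, whose periodic Green function is
   (U(m - 1 - j, q) + U(j - 1, q)) / (2 (T(m, q) - 1)).
   Summing the diagonal of M and the potential d/a + t (d - t)/(2 c) over a block gives
   quadratic sums in the offset. *)

theory Submission
  imports Defs
begin

section \<open>Group inverses\<close>

lemma mat_mult_assoc:
  "mat_mult N (mat_mult N A B) C i j = mat_mult N A (mat_mult N B C) i j"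
  unfolding mat_mult_def
  by (simp add: sum_distrib_left sum_distrib_right mult.assoc) (rule sum.swap)

definition agree_on :: "nat \<Rightarrow> (nat \<Rightarrow> nat \<Rightarrow> real) \<Rightarrow> (nat \<Rightarrow> nat \<Rightarrow> real) \<Rightarrow> bool" where
  "agree_on N X Y \<longleftrightarrow> (\<forall>i\<in>{1..N}. \<forall>j\<in>{1..N}. X i j = Y i j)"

lemma agree_on_trans [trans]: "agree_on N X Y \<Longrightarrow> agree_on N Y Z \<Longrightarrow> agree_on N X Z"
  by (auto simp: agree_on_def)

lemma agree_on_sym: "agree_on N X Y \<Longrightarrow> agree_on N Y X"
  by (auto simp: agree_on_def)

lemma agree_on_mat_mult_assoc:
  "agree_on N (mat_mult N (mat_mult N A B) C) (mat_mult N A (mat_mult N B C))"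
  by (simp add: agree_on_def mat_mult_assoc)

lemma agree_on_mat_mult_left:
  "agree_on N X X' \<Longrightarrow> agree_on N (mat_mult N X Y) (mat_mult N X' Y)"
  unfolding agree_on_def mat_mult_def by (auto intro!: sum.cong)

lemma agree_on_mat_mult_right:
  "agree_on N Y Y' \<Longrightarrow> agree_on N (mat_mult N X Y) (mat_mult N X Y')"
  unfolding agree_on_def mat_mult_def by (auto intro!: sum.cong)

lemma is_group_inverseD:
  assumes "is_group_inverse N L G"
  shows "agree_on N (mat_mult N (mat_mult N L G) L) L"
    and "agree_on N (mat_mult N (mat_mult N G L) G) G"
    and "agree_on N (mat_mult N L G) (mat_mult N G L)"
  using assms by (auto simp: is_group_inverse_def agree_on_def)

lemma group_inverse_projection_eq:
  assumes G1: "is_group_inverse N L G1" and G2: "is_group_inverse N L G2"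
  shows "agree_on N (mat_mult N G1 L) (mat_mult N L G2)"
proof -
  note A1 = is_group_inverseD[OF G1] and A2 = is_group_inverseD[OF G2]
  have "agree_on N (mat_mult N G1 L) (mat_mult N G1 (mat_mult N (mat_mult N L G2) L))"
    by (rule agree_on_mat_mult_right[OF agree_on_sym[OF A2(1)]])
  also have "agree_on N \<dots> (mat_mult N G1 (mat_mult N L (mat_mult N G2 L)))"
    by (rule agree_on_mat_mult_right[OF agree_on_mat_mult_assoc])
  also have "agree_on N \<dots> (mat_mult N (mat_mult N G1 L) (mat_mult N G2 L))"
    by (rule agree_on_sym, rule agree_on_mat_mult_assoc)
  also have "agree_on N \<dots> (mat_mult N (mat_mult N L G1) (mat_mult N G2 L))"
    by (rule agree_on_mat_mult_left[OF agree_on_sym[OF A1(3)]])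
  also have "agree_on N \<dots> (mat_mult N (mat_mult N L G1) (mat_mult N L G2))"
    by (rule agree_on_mat_mult_right[OF agree_on_sym[OF A2(3)]])
  also have "agree_on N \<dots> (mat_mult N (mat_mult N (mat_mult N L G1) L) G2)"
    by (rule agree_on_sym, rule agree_on_mat_mult_assoc)
  also have "agree_on N \<dots> (mat_mult N L G2)"
    by (rule agree_on_mat_mult_left[OF A1(1)])
  finally show ?thesis .
qed

lemma group_inverse_unique:
  assumes G1: "is_group_inverse N L G1" and G2: "is_group_inverse N L G2"
  shows "G1 = G2"
proof -
  note A1 = is_group_inverseD[OF G1] and A2 = is_group_inverseD[OF G2]
  note P = group_inverse_projection_eq[OF G1 G2]
  have "agree_on N G1 (mat_mult N (mat_mult N G1 L) G1)"
    by (rule agree_on_sym, rule A1(2))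
  also have "agree_on N \<dots> (mat_mult N (mat_mult N G2 L) G1)"
    by (rule agree_on_mat_mult_left[OF agree_on_trans[OF P A2(3)]])
  also have "agree_on N \<dots> (mat_mult N G2 (mat_mult N L G1))"
    by (rule agree_on_mat_mult_assoc)
  also have "agree_on N \<dots> (mat_mult N G2 (mat_mult N L G2))"
    by (rule agree_on_mat_mult_right[OF agree_on_trans[OF A1(3) P]])
  also have "agree_on N \<dots> (mat_mult N (mat_mult N G2 L) G2)"
    by (rule agree_on_sym, rule agree_on_mat_mult_assoc)
  also have "agree_on N \<dots> G2"
    by (rule A2(2))
  finally have "agree_on N G1 G2" .
  show ?thesis
  proof (intro ext)
    fix i j
    show "G1 i j = G2 i j"
      using \<open>agree_on N G1 G2\<close> G1 G2
      by (cases "i \<in> {1..N} \<and> j \<in> {1..N}") (auto simp: agree_on_def is_group_inverse_def)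
  qed
qed

lemma group_inverse_eqI: "is_group_inverse N L G \<Longrightarrow> group_inverse N L = G"
  unfolding group_inverse_def by (rule the_equality) (auto intro: group_inverse_unique)

section \<open>Grounding a vertex\<close>

lemma laplacian_sym:
  "(\<And>i j. cond i j = cond j i) \<Longrightarrow> laplacian N cond i j = laplacian N cond j i"
  by (auto simp: laplacian_def)

lemma laplacian_row_sum:
  assumes "i \<in> {1..N}" shows "(\<Sum>j\<in>{1..N}. laplacian N cond i j) = 0"
proof -
  have "(\<Sum>j\<in>{1..N}. laplacian N cond i j)
      = laplacian N cond i i + (\<Sum>j\<in>{1..N}-{i}. laplacian N cond i j)"
    using assms by (simp add: sum.remove)
  also have "(\<Sum>j\<in>{1..N}-{i}. laplacian N cond i j) = (\<Sum>j\<in>{1..N}-{i}. - cond i j)"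
    using assms by (intro sum.cong) (auto simp: laplacian_def)
  finally show ?thesis using assms by (simp add: laplacian_def sum_negf)
qed

lemma sum_indicator_mult:
  "finite A \<Longrightarrow> (\<Sum>l\<in>A. (if l = i then 1 else 0) * (f l::real)) = (if i \<in> A then f i else 0)"
  by (simp add: if_distrib[of "\<lambda>x. x * _"] sum.delta' cong: if_cong)

lemma sum_mult_indicator:
  "finite A \<Longrightarrow> (\<Sum>l\<in>A. (f l::real) * (if l = i then 1 else 0)) = (if i \<in> A then f i else 0)"
  by (simp add: if_distrib[of "\<lambda>x. _ * x"] sum.delta' cong: if_cong)

text \<open>\<open>M\<close> is the inverse of the Laplacian with the row and column of vertex \<open>n + 1\<close>
  deleted; centring its zero extension gives the group inverse of the full Laplacian.\<close>

locale grounded_inverse =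
  fixes n :: nat and cond M :: "nat \<Rightarrow> nat \<Rightarrow> real"
  assumes cond_sym: "\<And>i j. cond i j = cond j i"
    and inverse: "\<And>i j. i \<in> {1..n} \<Longrightarrow> j \<in> {1..n} \<Longrightarrow>
      (\<Sum>k\<in>{1..n}. laplacian (n+1) cond i k * M k j) = (if i = j then 1 else 0)"
begin

abbreviation L :: "nat \<Rightarrow> nat \<Rightarrow> real" where
  "L \<equiv> laplacian (n+1) cond"

lemma L_sym: "L i j = L j i"
  using cond_sym by (rule laplacian_sym)

declare sum.cl_ivl_Suc [simp del]

lemma num_vertices_nonzero: "1 + real n \<noteq> 0"
  by (simp add: add_nonneg_eq_0_iff)

lemma L_col_sum:
  assumes "j \<in> {1..n+1}" shows "(\<Sum>i\<in>{1..n+1}. L i j) = 0"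
proof -
  have "(\<Sum>i\<in>{1..n+1}. L i j) = (\<Sum>i\<in>{1..n+1}. L j i)"
    by (rule sum.cong[OF refl]) (rule L_sym)
  then show ?thesis using laplacian_row_sum[OF assms] by simp
qed

lemma M_sym:
  assumes i: "i \<in> {1..n}" and j: "j \<in> {1..n}"
  shows "M i j = M j i"
proof -
  have left_inverse: "(\<Sum>k\<in>{1..n}. M k i * L k l) = (if l = i then 1 else 0)" if "l \<in> {1..n}" for l
  proof -
    have "(\<Sum>k\<in>{1..n}. M k i * L k l) = (\<Sum>k\<in>{1..n}. L l k * M k i)"
      by (rule sum.cong[OF refl]) (metis L_sym mult.commute)
    then show ?thesis using inverse[OF that i] by simp
  qed
  have "M i j = (\<Sum>l\<in>{1..n}. (if l = i then 1 else 0) * M l j)"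
    using i by (simp add: sum_indicator_mult)
  also have "\<dots> = (\<Sum>l\<in>{1..n}. (\<Sum>k\<in>{1..n}. M k i * L k l) * M l j)"
    using left_inverse by simp
  also have "\<dots> = (\<Sum>k\<in>{1..n}. M k i * (\<Sum>l\<in>{1..n}. L k l * M l j))"
    by (simp add: sum_distrib_left sum_distrib_right mult.assoc) (rule sum.swap)
  also have "\<dots> = (\<Sum>k\<in>{1..n}. M k i * (if k = j then 1 else 0))"
    using inverse j by simp
  also have "\<dots> = M j i"
    using j by (simp add: sum_mult_indicator)
  finally show ?thesis .
qed

definition M0 :: "nat \<Rightarrow> nat \<Rightarrow> real" where
  "M0 i j = (if i \<in> {1..n} \<and> j \<in> {1..n} then M i j else 0)"

lemma M0_sym: "M0 i j = M0 j i"
  using M_sym by (auto simp: M0_def)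

lemma L_mult_M0:
  assumes i: "i \<in> {1..n+1}" and j: "j \<in> {1..n+1}"
  shows "(\<Sum>k\<in>{1..n+1}. L i k * M0 k j) = (if i = j then 1 else 0) - (if i = n+1 then 1 else 0)"
proof -
  have drop_last: "(\<Sum>k\<in>{1..n+1}. L i k * M0 k j) = (\<Sum>k\<in>{1..n}. L i k * M0 k j)"
    by (simp add: sum.cl_ivl_Suc M0_def)
  show ?thesis
  proof (cases "j = n+1")
    case True
    then show ?thesis using drop_last by (simp add: M0_def)
  next
    case False
    then have jn: "j \<in> {1..n}" using j by auto
    have M0_eq: "(\<Sum>k\<in>{1..n}. L i k * M0 k j) = (\<Sum>k\<in>{1..n}. L i k * M k j)"
      using jn by (intro sum.cong) (auto simp: M0_def)
    show ?thesis
    proof (cases "i = n+1")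
      case False
      then show ?thesis using i jn drop_last M0_eq inverse by simp
    next
      case True
      have last_row: "L (n+1) k = - (\<Sum>i'\<in>{1..n}. L i' k)" if "k \<in> {1..n}" for k
        using L_col_sum[of k] that by (simp add: sum.cl_ivl_Suc)
      have "(\<Sum>k\<in>{1..n}. L (n+1) k * M k j) = - (\<Sum>k\<in>{1..n}. \<Sum>i'\<in>{1..n}. L i' k * M k j)"
        using last_row by (simp add: sum_distrib_right sum_negf)
      also have "\<dots> = - (\<Sum>i'\<in>{1..n}. \<Sum>k\<in>{1..n}. L i' k * M k j)"
        by (subst sum.swap) simp
      also have "\<dots> = -1"
        using inverse jn by simp
      finally show ?thesis using drop_last M0_eq True jn by simp
    qed
  qed
qed

definition row_mean :: "nat \<Rightarrow> real" where
  "row_mean i = (\<Sum>j\<in>{1..n+1}. M0 i j) / (n+1)"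

definition grand_mean :: real where
  "grand_mean = (\<Sum>i\<in>{1..n+1}. row_mean i) / (n+1)"

definition green :: "nat \<Rightarrow> nat \<Rightarrow> real" where
  "green i j = (if i \<in> {1..n+1} \<and> j \<in> {1..n+1} then
     M0 i j - row_mean i - row_mean j + grand_mean else 0)"

lemma green_sym: "green i j = green j i"
  by (auto simp: green_def M0_sym)

lemma sum_row_mean: "(\<Sum>i\<in>{1..n+1}. row_mean i) = (n+1) * grand_mean"
  using num_vertices_nonzero by (simp add: grand_mean_def)

lemma sum_M0_col: "(\<Sum>i\<in>{1..n+1}. M0 i j) = (n+1) * row_mean j"
proof -
  have "(\<Sum>i\<in>{1..n+1}. M0 i j) = (\<Sum>i\<in>{1..n+1}. M0 j i)"
    by (rule sum.cong[OF refl]) (rule M0_sym)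
  then show ?thesis using num_vertices_nonzero by (simp add: row_mean_def)
qed

lemma L_mult_row_mean:
  assumes i: "i \<in> {1..n+1}"
  shows "(\<Sum>k\<in>{1..n+1}. L i k * row_mean k) = 1 / (n+1) - (if i = n+1 then 1 else 0)"
proof -
  have "(\<Sum>k\<in>{1..n+1}. L i k * row_mean k) = (\<Sum>l\<in>{1..n+1}. \<Sum>k\<in>{1..n+1}. L i k * M0 k l) / (n+1)"
    unfolding row_mean_def by (simp add: sum_distrib_left sum_divide_distrib) (rule sum.swap)
  also have "\<dots> = (\<Sum>l\<in>{1..n+1}. (if i = l then 1 else 0) - (if i = n+1 then 1 else 0)) / (n+1)"
    using L_mult_M0 i by simp
  also have "\<dots> = 1 / (n+1) - (if i = n+1 then 1 else 0)"
    using i num_vertices_nonzero by (simp add: sum_subtractf diff_divide_distrib)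
  finally show ?thesis .
qed

lemma L_mult_green:
  assumes i: "i \<in> {1..n+1}" and j: "j \<in> {1..n+1}"
  shows "(\<Sum>k\<in>{1..n+1}. L i k * green k j) = (if i = j then 1 else 0) - 1 / (n+1)"
proof -
  have "(\<Sum>k\<in>{1..n+1}. L i k * green k j) = (\<Sum>k\<in>{1..n+1}. L i k * M0 k j)
      - (\<Sum>k\<in>{1..n+1}. L i k * row_mean k) + (grand_mean - row_mean j) * (\<Sum>k\<in>{1..n+1}. L i k)"
    using j by (simp add: green_def algebra_simps sum_subtractf sum.distrib sum_distrib_left
        sum_distrib_right)
  then show ?thesis
    unfolding L_mult_M0[OF i j] L_mult_row_mean[OF i] laplacian_row_sum[OF i] by simp
qed

lemma green_mult_L:
  assumes i: "i \<in> {1..n+1}" and j: "j \<in> {1..n+1}"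
  shows "(\<Sum>k\<in>{1..n+1}. green i k * L k j) = (if i = j then 1 else 0) - 1 / (n+1)"
proof -
  have "(\<Sum>k\<in>{1..n+1}. green i k * L k j) = (\<Sum>k\<in>{1..n+1}. L j k * green k i)"
    by (rule sum.cong[OF refl]) (metis green_sym L_sym mult.commute)
  then show ?thesis using L_mult_green[OF j i] by (simp add: eq_commute)
qed

lemma green_col_sum:
  assumes j: "j \<in> {1..n+1}"
  shows "(\<Sum>i\<in>{1..n+1}. green i j) = 0"
proof -
  have "(\<Sum>i\<in>{1..n+1}. green i j) = (\<Sum>i\<in>{1..n+1}. M0 i j) - (\<Sum>i\<in>{1..n+1}. row_mean i)
      - (n+1) * row_mean j + (n+1) * grand_mean"
    using j by (simp add: green_def sum_subtractf sum.distrib)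
  then show ?thesis
    unfolding sum_M0_col sum_row_mean by simp
qed

lemma is_group_inverse_green: "is_group_inverse (n+1) L green"
  unfolding is_group_inverse_def
proof (intro conjI ballI allI impI)
  fix i j assume "\<not> (i \<in> {1..n+1} \<and> j \<in> {1..n+1})"
  then show "green i j = 0" unfolding green_def by auto
next
  fix i j assume i: "i \<in> {1..n+1}" and j: "j \<in> {1..n+1}"
  show "mat_mult (n+1) L green i j = mat_mult (n+1) green L i j"
    using L_mult_green[OF i j] green_mult_L[OF i j] by (simp add: mat_mult_def)
  have "mat_mult (n+1) (mat_mult (n+1) L green) L i j
      = (\<Sum>k\<in>{1..n+1}. ((if k = i then 1 else 0) - 1 / (n+1)) * L k j)"
    unfolding mat_mult_def using L_mult_green[OF i] by (intro sum.cong) (auto simp: eq_commute)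
  also have "\<dots> = L i j"
    using i L_col_sum[OF j]
    by (simp add: left_diff_distrib sum_subtractf sum_indicator_mult flip: sum_divide_distrib)
  finally show "mat_mult (n+1) (mat_mult (n+1) L green) L i j = L i j" .
  have "mat_mult (n+1) (mat_mult (n+1) green L) green i j
      = (\<Sum>k\<in>{1..n+1}. ((if k = i then 1 else 0) - 1 / (n+1)) * green k j)"
    unfolding mat_mult_def using green_mult_L[OF i] by (intro sum.cong) (auto simp: eq_commute)
  also have "\<dots> = green i j"
    using i green_col_sum[OF j]
    by (simp add: left_diff_distrib sum_subtractf sum_indicator_mult flip: sum_divide_distrib)
  finally show "mat_mult (n+1) (mat_mult (n+1) green L) green i j = green i j" .
qed

lemma kirchhoff_index_grounded:
  "kirchhoff_index (n+1) cond = real (n+1) * (\<Sum>i\<in>{1..n}. M i i) - (\<Sum>i\<in>{1..n}. \<Sum>j\<in>{1..n}. M i j)"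
proof -
  have double_sum: "(\<Sum>i\<in>{1..n+1}. \<Sum>j\<in>{1..n+1}. green i j) = 0"
    by (subst sum.swap, rule sum.neutral) (use green_col_sum in blast)
  have trace: "(\<Sum>i\<in>{1..n+1}. green i i) = (\<Sum>i\<in>{1..n+1}. M0 i i) - (n+1) * grand_mean"
  proof -
    have "(\<Sum>i\<in>{1..n+1}. green i i)
        = (\<Sum>i\<in>{1..n+1}. M0 i i) - 2 * (\<Sum>i\<in>{1..n+1}. row_mean i) + (n+1) * grand_mean"
      by (simp add: green_def sum_subtractf sum.distrib sum_distrib_left)
    then show ?thesis unfolding sum_row_mean by simp
  qed
  have "(n+1) * ((n+1) * grand_mean) = (\<Sum>i\<in>{1..n+1}. (n+1) * row_mean i)"
    by (simp only: sum_row_mean flip: sum_distrib_left)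
  also have "\<dots> = (\<Sum>i\<in>{1..n+1}. \<Sum>j\<in>{1..n+1}. M0 i j)"
    using num_vertices_nonzero by (simp add: row_mean_def)
  finally have total: "(\<Sum>i\<in>{1..n+1}. \<Sum>j\<in>{1..n+1}. M0 i j) = (n+1) * ((n+1) * grand_mean)" ..
  have "kirchhoff_index (n+1) cond
      = (1/2) * (\<Sum>i\<in>{1..n+1}. \<Sum>j\<in>{1..n+1}. green i i + green j j - 2 * green i j)"
    unfolding kirchhoff_index_def eff_resistance_def group_inverse_eqI[OF is_group_inverse_green]
    by (simp add: Let_def)
  also have "\<dots> = real (n+1) * (\<Sum>i\<in>{1..n+1}. green i i) - (\<Sum>i\<in>{1..n+1}. \<Sum>j\<in>{1..n+1}. green i j)"
    by (simp add: sum_subtractf sum.distrib sum_distrib_left flip: sum_distrib_left)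
  also have "\<dots> = real (n+1) * (\<Sum>i\<in>{1..n+1}. M0 i i) - (\<Sum>i\<in>{1..n+1}. \<Sum>j\<in>{1..n+1}. M0 i j)"
    unfolding double_sum trace total by (simp add: algebra_simps)
  finally show ?thesis
    by (simp add: M0_def sum.cl_ivl_Suc)
qed

lemma sum_grounded_inverse:
  assumes potential: "\<And>i. i \<in> {1..n} \<Longrightarrow> (\<Sum>k\<in>{1..n}. L i k * x k) = 1"
  shows "(\<Sum>i\<in>{1..n}. \<Sum>j\<in>{1..n}. M i j) = (\<Sum>j\<in>{1..n}. x j)"
proof -
  have potential': "(\<Sum>k\<in>{1..n}. x k * L k i) = 1" if "i \<in> {1..n}" for i
  proof -
    have "(\<Sum>k\<in>{1..n}. x k * L k i) = (\<Sum>k\<in>{1..n}. L i k * x k)"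
      by (rule sum.cong[OF refl]) (metis L_sym mult.commute)
    then show ?thesis using potential[OF that] by simp
  qed
  have "(\<Sum>i\<in>{1..n}. \<Sum>j\<in>{1..n}. M i j)
      = (\<Sum>j\<in>{1..n}. \<Sum>i\<in>{1..n}. (\<Sum>k\<in>{1..n}. x k * L k i) * M i j)"
    by (subst sum.swap) (rule sum.cong[OF refl], rule sum.cong[OF refl], subst potential'; simp)
  also have "\<dots> = (\<Sum>j\<in>{1..n}. \<Sum>k\<in>{1..n}. x k * (\<Sum>i\<in>{1..n}. L k i * M i j))"
    by (simp add: sum_distrib_left sum_distrib_right mult.assoc) (subst (2) sum.swap, simp)
  also have "\<dots> = (\<Sum>j\<in>{1..n}. \<Sum>k\<in>{1..n}. x k * (if k = j then 1 else 0))"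
    using inverse by simp
  also have "\<dots> = (\<Sum>j\<in>{1..n}. x j)"
    by (simp add: sum_mult_indicator)
  finally show ?thesis .
qed

end

section \<open>Chebyshev polynomials\<close>

lemma chebT_gt_1:
  assumes q: "q > (1::real)" and m: "m \<ge> 1"
  shows "chebT m q > 1"
proof -
  have "1 \<le> chebT k q \<and> chebT k q < chebT (Suc k) q" for k
  proof (induction k)
    case 0 then show ?case using q by simp
  next
    case (Suc k)
    then have "chebT (Suc k) q > 1" by linarith
    then have "(2*q - 1) * chebT (Suc k) q > chebT (Suc k) q"
      using q mult_strict_right_mono[of 1 "2*q-1" "chebT (Suc k) q"] by simp
    moreover have "2*q*chebT (Suc k) q = (2*q - 1) * chebT (Suc k) q + chebT (Suc k) q"
      by (simp add: algebra_simps)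
    ultimately show ?case using Suc by (simp only: chebT.simps(3)) linarith
  qed
  from this[of "m - 1"] show ?thesis using m by (cases m) auto
qed

lemma chebT_eq_chebU: "chebT (Suc (Suc k)) x = x * chebU (Suc k) x - chebU k x"
proof (induction k x rule: chebT.induct)
  case (3 k x)
  then show ?case
    using chebU.simps(3)[of "Suc k" x] chebT.simps(3)[of "Suc (Suc k)" x] chebU.simps(3)[of k x]
    by algebra
qed (simp_all add: algebra_simps)

lemma chebV_eq_chebT_chebU: "chebV k x = chebT (Suc k) x - (x - 1) * chebU k x"
proof (induction k x rule: chebT.induct)
  case (3 k x)
  then show ?case
    using chebT.simps(3)[of "Suc k" x] chebU.simps(3)[of k x] chebV.simps(3)[of k x]
    by algebra
qed (simp_all add: algebra_simps)

definition chebU_shift :: "nat \<Rightarrow> real \<Rightarrow> real" where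
  "chebU_shift k x = (if k = 0 then 0 else chebU (k - 1) x)"

lemma chebU_shift_rec:
  "chebU_shift (Suc (Suc k)) x = 2 * x * chebU_shift (Suc k) x - chebU_shift k x"
  by (cases k) (auto simp: chebU_shift_def)

lemma chebU_shift_0 [simp]: "chebU_shift 0 x = 0"
  by (simp add: chebU_shift_def)

lemma chebU_shift_Suc [simp]: "chebU_shift (Suc k) x = chebU k x"
  by (simp add: chebU_shift_def)

definition cycle_green :: "nat \<Rightarrow> real \<Rightarrow> nat \<Rightarrow> real" where
  "cycle_green m q j = (chebU_shift (m - j) q + chebU_shift j q) / (2 * (chebT m q - 1))"

lemma cycle_green_eq:
  assumes m: "m \<ge> 2" and q: "q > 1" and j: "j < m"
  shows "2 * q * cycle_green m q j - cycle_green m q ((j + m - 1) mod m) - cycle_green m q ((j + 1) mod m)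
    = (if j = 0 then 1 else 0)"
proof -
  define D where "D = 2 * (chebT m q - 1)"
  have D: "D \<noteq> 0" using chebT_gt_1[OF q, of m] m by (simp add: D_def)
  let ?S = "\<lambda>k. chebU_shift k q"
  have cg: "cycle_green m q k = (?S (m - k) + ?S k) / D" for k
    by (simp add: cycle_green_def D_def)
  show ?thesis
  proof (cases "j = 0")
    case True
    obtain k where mk: "m = Suc (Suc k)" using m by (metis add_2_eq_Suc le_Suc_ex)
    have num: "2 * q * ?S m - 2 * ?S (Suc k) - 2 * ?S 1 = D"
      using chebT_eq_chebU[of k q] by (simp add: D_def mk algebra_simps)
    have "(j + m - 1) mod m = Suc k" "(j + 1) mod m = 1" "m - Suc k = 1"
      using True mk by auto
    then have "2 * q * cycle_green m q j - cycle_green m q ((j + m - 1) mod m) - cycle_green m q ((j + 1) mod m)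
        = (2 * q * ?S m - 2 * ?S (Suc k) - 2 * ?S 1) / D"
      unfolding cg using True D mk by (simp add: field_simps)
    then show ?thesis using num D True by simp
  next
    case False
    have "(j + m - 1) mod m = j - 1" and "m - (j - 1) = m - j + 1"
      using False j by (simp_all add: mod_if)
    then have prev: "cycle_green m q ((j + m - 1) mod m) = (?S (m - j + 1) + ?S (j - 1)) / D"
      unfolding cg by simp
    have succ: "cycle_green m q ((j + 1) mod m) = (?S (m - j - 1) + ?S (j + 1)) / D"
      using j unfolding cg by (cases "j + 1 = m") (auto simp: chebU_shift_def add.commute)
    have "?S (m - j + 1) = 2 * q * ?S (m - j) - ?S (m - j - 1)"
      using chebU_shift_rec[of "m - j - 1" q] j by (simp add: Suc_diff_Suc)
    moreover have "?S (j + 1) = 2 * q * ?S j - ?S (j - 1)"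
      using chebU_shift_rec[of "j - 1" q] False by simp
    ultimately have num: "2 * q * (?S (m - j) + ?S j) - (?S (m - j + 1) + ?S (j - 1))
        - (?S (m - j - 1) + ?S (j + 1)) = 0"
      by (simp add: algebra_simps)
    have "2 * q * cycle_green m q j - cycle_green m q ((j + m - 1) mod m) - cycle_green m q ((j + 1) mod m)
        = (2 * q * (?S (m - j) + ?S j) - (?S (m - j + 1) + ?S (j - 1)) - (?S (m - j - 1) + ?S (j + 1))) / D"
      unfolding prev succ cg[of j] using D by (simp add: field_simps)
    then show ?thesis
      unfolding num using False by simp
  qed
qed

lemma cycle_green_sym: "j \<le> m \<Longrightarrow> cycle_green m q (m - j) = cycle_green m q j"
  by (simp add: cycle_green_def add.commute)

section \<open>The wheel Laplacian on the rim\<close>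

text \<open>Rim vertex \<open>i \<in> {1..n}\<close> is encoded as \<open>w = i - 1 \<in> {0..<n}\<close>, so that the spokes sit
  at the multiples of \<open>d\<close>. Grounding the hub leaves the following operator.\<close>

definition rim_laplacian :: "nat \<Rightarrow> nat \<Rightarrow> real \<Rightarrow> real \<Rightarrow> (nat \<Rightarrow> real) \<Rightarrow> nat \<Rightarrow> real" where
  "rim_laplacian m d a c f w =
     (2 * c + (if d dvd w then a else 0)) * f w
     - c * f ((w + (m * d - 1)) mod (m * d)) - c * f ((w + 1) mod (m * d))"

lemma wheel_cond_sym: "wheel_cond m d a c i j = wheel_cond m d a c j i"
  unfolding wheel_cond_def Let_def by auto

lemma wheel_spoke_iff:
  fixes m d i :: nat
  assumes "i \<in> {1..m*d}" and "d \<ge> 1"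
  shows "i \<in> {1 + (k - 1) * d | k. k \<in> {1..m}} \<longleftrightarrow> d dvd (i - 1)"
proof
  assume "i \<in> {1 + (k - 1) * d | k. k \<in> {1..m}}"
  then obtain k where "i = 1 + (k - 1) * d" by auto
  then show "d dvd (i - 1)" by simp
next
  assume "d dvd (i - 1)"
  then obtain k where k: "i - 1 = d * k" by auto
  have "i - 1 < m * d" using assms by auto
  have km: "k < m"
  proof (rule ccontr)
    assume "\<not> k < m"
    then have "m * d \<le> k * d" by simp
    then show False using \<open>i - 1 < m * d\<close> k by (simp add: mult.commute)
  qed
  have "i = 1 + (Suc k - 1) * d"
  proof -
    have "i \<ge> 1" using assms by simp
    then have "i = Suc (d * k)" using k by arith
    then show ?thesis by (simp add: mult.commute)
  qed
  moreover have "Suc k \<in> {1..m}" using km by simp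
  ultimately show "i \<in> {1 + (k - 1) * d | k. k \<in> {1..m}}" by blast
qed

lemma wheel_cond_rim:
  assumes n: "m * d \<ge> 3" and d: "d \<ge> 1" and i: "i \<in> {1..m*d}"
    and k: "k \<in> {1..m*d+1}" and ki: "k \<noteq> i"
  shows "wheel_cond m d a c i k =
    (if k = (if i = 1 then m*d else i - 1) then c else 0)
    + (if k = (if i = m*d then 1 else i + 1) then c else 0)
    + (if k = m*d + 1 \<and> d dvd (i - 1) then a else 0)"
proof (cases "k = m*d + 1")
  case True
  then show ?thesis using i wheel_spoke_iff[OF i d] unfolding wheel_cond_def Let_def by auto
next
  case False
  then show ?thesis using i k ki n unfolding wheel_cond_def Let_def by auto
qed

lemma cycle_pred_succ:
  fixes i n :: nat
  assumes "i \<in> {1..n}"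
  shows "(if i = 1 then n else i - 1) = (i - 1 + (n - 1)) mod n + 1"
    and "(if i = n then 1 else i + 1) = (i - 1 + 1) mod n + 1"
proof -
  show "(if i = 1 then n else i - 1) = (i - 1 + (n - 1)) mod n + 1"
  proof (cases "i = 1")
    case False
    then have "i - 1 + (n - 1) = (i - 2) + n" and "i - 2 < n" using assms by auto
    then have "(i - 1 + (n - 1)) mod n = i - 2" by (metis mod_add_self2 mod_less)
    then show ?thesis using False assms by (simp; arith)
  qed (use assms in simp)
  show "(if i = n then 1 else i + 1) = (i - 1 + 1) mod n + 1"
    using assms by auto
qed

lemma wheel_laplacian_row:
  assumes n: "m * d \<ge> 3" and d: "d \<ge> 1" and i: "i \<in> {1..m*d}"
  shows "(\<Sum>k\<in>{1..m*d}. laplacian (m*d+1) (wheel_cond m d a c) i k * X k) =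
    rim_laplacian m d a c (\<lambda>w. X (w + 1)) (i - 1)"
proof -
  define n where "n = m * d"
  define p where "p = (if i = 1 then n else i - 1)"
  define s where "s = (if i = n then 1 else i + 1)"
  define spoke where "spoke = (d dvd (i - 1))"
  let ?L = "laplacian (n+1) (wheel_cond m d a c)"
  have iN: "i \<in> {1..n}" using i by (simp add: n_def)
  have p: "p \<in> {1..n}" "p \<noteq> i" and s: "s \<in> {1..n}" "s \<noteq> i" "s \<noteq> p"
    using iN n by (auto simp: s_def p_def n_def)
  have cond: "wheel_cond m d a c i k =
      (if k = p then c else 0) + (if k = s then c else 0) + (if spoke \<and> k = n + 1 then a else 0)"
    if "k \<in> {1..n+1}" "k \<noteq> i" for k
    using wheel_cond_rim[OF n d i, of k a c] that by (auto simp: p_def s_def spoke_def n_def)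
  have diag: "?L i i = 2 * c + (if spoke then a else 0)"
  proof -
    have "?L i i = (\<Sum>k\<in>{1..n+1}-{i}. wheel_cond m d a c i k)"
      using iN by (simp add: laplacian_def)
    also have "\<dots> = (\<Sum>k\<in>{1..n+1}-{i}.
        (if k = p then c else 0) + (if k = s then c else 0) + (if spoke \<and> k = n + 1 then a else 0))"
      by (rule sum.cong) (auto simp: cond)
    also have "\<dots> = 2 * c + (if spoke then a else 0)"
      using p s iN by (simp add: sum.distrib)
    finally show ?thesis .
  qed
  have off_diag: "?L i k * X k = (if k = p then - (c * X k) else 0) + (if k = s then - (c * X k) else 0)"
    if "k \<in> {1..n}-{i}" for k
    using that iN cond[of k] by (simp add: laplacian_def)
  have "(\<Sum>k\<in>{1..n}. ?L i k * X k) = ?L i i * X i + (\<Sum>k\<in>{1..n}-{i}. ?L i k * X k)"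
    using iN by (simp add: sum.remove)
  also have "(\<Sum>k\<in>{1..n}-{i}. ?L i k * X k) =
      (\<Sum>k\<in>{1..n}-{i}. (if k = p then - (c * X k) else 0) + (if k = s then - (c * X k) else 0))"
    by (rule sum.cong[OF refl]) (rule off_diag)
  also have "\<dots> = - c * X p - c * X s"
    using p s by (simp only: sum.distrib) simp
  finally have row: "(\<Sum>k\<in>{1..n}. ?L i k * X k) =
      (2 * c + (if spoke then a else 0)) * X i - c * X p - c * X s"
    using diag by (simp add: algebra_simps)
  then show ?thesis
    using iN cycle_pred_succ[OF iN] by (simp add: rim_laplacian_def spoke_def n_def p_def s_def)
qed

lemma block_div_mod:
  fixes j d t :: nat
  assumes "t < d"
  shows "(j * d + t) div d = j" and "(j * d + t) mod d = t"
  using assms by auto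

lemma block_succ:
  fixes E :: "nat \<Rightarrow> nat \<Rightarrow> real"
  assumes m: "m \<ge> 1" and d: "d \<ge> 1" and w: "w < m * d"
    and glue: "\<And>j. j < m \<Longrightarrow> E j d = E ((j + 1) mod m) 0"
  shows "E (((w + 1) mod (m*d)) div d) (((w + 1) mod (m*d)) mod d) = E (w div d) (w mod d + 1)"
proof -
  define j where "j = w div d"
  define t where "t = w mod d"
  have wjt: "w = j * d + t" by (simp add: j_def t_def)
  have t: "t < d" using d by (simp add: t_def)
  have j: "j < m" using w d by (simp add: j_def less_mult_imp_div_less)
  show ?thesis
  proof (cases "t + 1 < d")
    case True
    have "w + 1 < (j + 1) * d" using wjt True by simp
    also have "\<dots> \<le> m * d" using j by (intro mult_le_mono1) simp
    finally have e: "(w + 1) mod (m*d) = j * d + (t + 1)" using wjt by simp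
    show ?thesis unfolding e block_div_mod[OF True] j_def[symmetric] t_def[symmetric] ..
  next
    case False
    then have td: "t + 1 = d" using t by simp
    then have glued: "E j (t + 1) = E ((j + 1) mod m) 0" using glue[OF j] by simp
    show ?thesis
    proof (cases "j + 1 < m")
      case True
      have "w + 1 = (j + 1) * d" using wjt td by simp
      moreover have "(j + 1) * d < m * d" using True d by (simp only: mult_less_cancel2) simp
      ultimately have e: "(w + 1) mod (m*d) = (j + 1) * d + 0" by simp
      have "0 < d" using d by simp
      then show ?thesis
        using glued True unfolding e block_div_mod[OF \<open>0 < d\<close>] j_def[symmetric] t_def[symmetric] by simp
    next
      case False
      then have jm: "j + 1 = m" using j by simp
      moreover have "w + 1 = (j + 1) * d" using wjt td by simp
      ultimately have "(w + 1) mod (m * d) = 0" by simp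
      then show ?thesis using glued jm unfolding j_def[symmetric] t_def[symmetric] by simp
    qed
  qed
qed

lemma block_pred:
  fixes E :: "nat \<Rightarrow> nat \<Rightarrow> real"
  assumes m: "m \<ge> 1" and d: "d \<ge> 1" and w: "w < m * d"
  shows "E (((w + (m*d - 1)) mod (m*d)) div d) (((w + (m*d - 1)) mod (m*d)) mod d) =
    (if w mod d > 0 then E (w div d) (w mod d - 1) else E ((w div d + m - 1) mod m) (d - 1))"
proof -
  define j where "j = w div d"
  define t where "t = w mod d"
  have wjt: "w = j * d + t" by (simp add: j_def t_def)
  have t: "t < d" using d by (simp add: t_def)
  have j: "j < m" using w d by (simp add: j_def less_mult_imp_div_less)
  have pred: "(w + (m*d - 1)) mod (m*d) = w - 1" if "w \<ge> 1"
  proof -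
    have "w + (m*d - 1) = (w - 1) + m*d" using that w by simp
    then have "(w + (m*d - 1)) mod (m*d) = ((w - 1) + m*d) mod (m*d)" by (simp only:)
    also have "\<dots> = w - 1" using w by simp
    finally show ?thesis .
  qed
  show ?thesis
  proof (cases "t > 0")
    case True
    then have e: "(w + (m*d - 1)) mod (m*d) = j * d + (t - 1)" using pred wjt by simp
    have "t - 1 < d" using t by simp
    then show ?thesis
      using True unfolding e block_div_mod[OF \<open>t - 1 < d\<close>] j_def[symmetric] t_def[symmetric] by simp
  next
    case False
    then have t0: "t = 0" by simp
    show ?thesis
    proof (cases "j = 0")
      case True
      then have "w = 0" using wjt t0 by simp
      then have e: "(w + (m*d - 1)) mod (m*d) = (m - 1) * d + (d - 1)"
        using m d by (simp add: diff_mult_distrib)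
      have "(j + m - 1) mod m = m - 1" using True m by simp
      moreover have "d - 1 < d" using d by simp
      ultimately show ?thesis
        using t0 True unfolding e block_div_mod[OF \<open>d - 1 < d\<close>] j_def[symmetric] t_def[symmetric] by simp
    next
      case False
      then have e: "(w + (m*d - 1)) mod (m*d) = (j - 1) * d + (d - 1)"
        using pred wjt t0 d by (cases j) auto
      have "(j + m - 1) mod m = j - 1" using j False by (simp add: mod_if)
      moreover have "d - 1 < d" using d by simp
      ultimately show ?thesis
        using t0 unfolding e block_div_mod[OF \<open>d - 1 < d\<close>] j_def[symmetric] t_def[symmetric] by simp
    qed
  qed
qed

lemma rim_laplacian_blocks:
  fixes E :: "nat \<Rightarrow> nat \<Rightarrow> real"
  assumes m: "m \<ge> 1" and d: "d \<ge> 1" and w: "w < m * d"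
    and glue: "\<And>j. j < m \<Longrightarrow> E j d = E ((j + 1) mod m) 0"
  shows "rim_laplacian m d a c (\<lambda>w. E (w div d) (w mod d)) w =
    (if w mod d > 0
     then 2 * c * E (w div d) (w mod d) - c * E (w div d) (w mod d - 1) - c * E (w div d) (w mod d + 1)
     else (2 * c + a) * E (w div d) 0 - c * E ((w div d + m - 1) mod m) (d - 1) - c * E (w div d) 1)"
proof -
  have succ: "E (((w + 1) mod (m*d)) div d) (((w + 1) mod (m*d)) mod d) = E (w div d) (w mod d + 1)"
    by (rule block_succ[OF m d w]) (rule glue)
  show ?thesis
    unfolding rim_laplacian_def succ block_pred[OF m d w]
    by (cases "w mod d = 0") (simp_all add: dvd_eq_mod_eq_0)
qed

lemma rim_laplacian_rotate:
  assumes r: "d dvd r"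
  shows "rim_laplacian m d a c (\<lambda>v. f ((v + r) mod (m*d))) w =
    rim_laplacian m d a c f ((w + r) mod (m*d))"
proof -
  have shift: "((w + k) mod (m*d) + r) mod (m*d) = ((w + r) mod (m*d) + k) mod (m*d)" for k
    unfolding mod_add_left_eq by (simp add: ac_simps)
  have "d dvd (w + r) mod (m*d) \<longleftrightarrow> d dvd w"
    using r by (simp add: dvd_mod_iff dvd_add_left_iff)
  then show ?thesis unfolding rim_laplacian_def shift by simp
qed

section \<open>The Green function of the grounded rim\<close>

text \<open>The Green function of a path \<open>0, \<dots>, d\<close> of conductance \<open>c\<close> with both ends grounded.\<close>

definition tent :: "nat \<Rightarrow> real \<Rightarrow> nat \<Rightarrow> nat \<Rightarrow> real" where
  "tent d c s t = real (min s t) * (real d - real (max s t)) / (c * real d)"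

lemma tent_0 [simp]: "tent d c s 0 = 0"
  by (simp add: tent_def)

lemma tent_right_end: "s \<le> d \<Longrightarrow> tent d c s d = 0"
  by (simp add: tent_def max_def)

lemma tent_interior:
  assumes c: "c > 0" and t: "0 < t" "t < d" and s: "s < d"
  shows "c * (2 * tent d c s t - tent d c s (t - 1) - tent d c s (t + 1)) = (if t = s then 1 else 0)"
proof -
  have d: "real d > 0" and t1: "real (t - 1) = real t - 1" using t by auto
  consider "t < s" | "t = s" | "t > s" by linarith
  then show ?thesis
  proof cases
    case 1
    then have "min s t = t" "max s t = s" "min s (t + 1) = t + 1" "max s (t + 1) = s"
      "min s (t - 1) = t - 1" "max s (t - 1) = s"
      by auto
    then show ?thesis using 1 c d t1 unfolding tent_def by (simp add: field_simps)
  next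
    case 2
    then have "min s t = s" "max s t = s" "min s (t + 1) = s" "max s (t + 1) = s + 1"
      "min s (t - 1) = s - 1" "max s (t - 1) = s"
      by auto
    then show ?thesis using 2 c d t1 unfolding tent_def by (simp add: field_simps)
  next
    case 3
    then have "min s t = s" "max s t = t" "min s (t + 1) = s" "max s (t + 1) = t + 1"
      "min s (t - 1) = s" "max s (t - 1) = t - 1"
      by auto
    then show ?thesis using 3 c d t1 unfolding tent_def by (simp add: field_simps)
  qed
qed

lemma tent_1:
  assumes c: "c > 0" and s: "s < d"
  shows "c * tent d c s 1 = (if s = 0 then 0 else (real d - real s) / real d)"
proof (cases "s = 0")
  case False
  then have "min s 1 = 1" "max s 1 = s" by auto
  then show ?thesis using False c unfolding tent_def by simp
qed (simp add: tent_def)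

lemma tent_pred_right_end:
  assumes c: "c > 0" and s: "s < d"
  shows "c * tent d c s (d - 1) = real s / real d"
proof -
  have "min s (d - 1) = s" "max s (d - 1) = d - 1" using s by auto
  moreover have "real d - real (d - 1) = 1" using s by simp
  ultimately show ?thesis using c unfolding tent_def by simp
qed

text \<open>Values at the spokes, for a unit source at offset \<open>s\<close> of block 0: a source at \<open>s\<close> acts on the
  two adjacent spokes like sources of weights \<open>(d - s)/d\<close> and \<open>s/d\<close>.\<close>

definition spoke_green :: "nat \<Rightarrow> nat \<Rightarrow> real \<Rightarrow> real \<Rightarrow> nat \<Rightarrow> nat \<Rightarrow> real" where
  "spoke_green m d c q s j =
     ((real d - real s) * cycle_green m q j + real s * cycle_green m q ((j + m - 1) mod m)) / c"

definition rim_green :: "nat \<Rightarrow> nat \<Rightarrow> real \<Rightarrow> real \<Rightarrow> nat \<Rightarrow> nat \<Rightarrow> nat \<Rightarrow> real" where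
  "rim_green m d c q s j t =
     ((real d - real t) * spoke_green m d c q s j + real t * spoke_green m d c q s ((j + 1) mod m)) / real d
     + (if j = 0 then tent d c s t else 0)"

lemma mod_succ_pred:
  fixes j m :: nat
  assumes "j < m"
  shows "((j + m - 1) mod m + 1) mod m = j" and "((j + 1) mod m + m - 1) mod m = j"
  using assms by (auto simp: mod_if)

lemma spoke_green_eq:
  assumes m: "m \<ge> 2" and q: "q > 1" and j: "j < m" and c: "c \<noteq> 0"
  shows "2 * q * spoke_green m d c q s j - spoke_green m d c q s ((j + m - 1) mod m)
      - spoke_green m d c q s ((j + 1) mod m)
    = ((if j = 0 then real d - real s else 0) + (if (j + m - 1) mod m = 0 then real s else 0)) / c"
proof -
  define j' where "j' = (j + m - 1) mod m"
  define j1 where "j1 = (j + 1) mod m"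
  define j'' where "j'' = (j' + m - 1) mod m"
  have j': "j' < m" using m by (simp add: j'_def)
  have j1_pred: "(j1 + m - 1) mod m = j" using mod_succ_pred(2)[OF j] by (simp add: j1_def)
  have j'_succ: "(j' + 1) mod m = j" using mod_succ_pred(1)[OF j] by (simp add: j'_def)
  have z: "2 * q * cycle_green m q j - cycle_green m q j' - cycle_green m q j1 = (if j = 0 then 1 else 0)"
    using cycle_green_eq[OF m q j] by (simp add: j'_def j1_def)
  have z': "2 * q * cycle_green m q j' - cycle_green m q j'' - cycle_green m q j = (if j' = 0 then 1 else 0)"
    using cycle_green_eq[OF m q j'] j'_succ by (simp add: j''_def)
  have "c * (2 * q * spoke_green m d c q s j - spoke_green m d c q s j' - spoke_green m d c q s j1)
      = (real d - real s) * (2 * q * cycle_green m q j - cycle_green m q j' - cycle_green m q j1)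
        + real s * (2 * q * cycle_green m q j' - cycle_green m q j'' - cycle_green m q j)"
    unfolding spoke_green_def j1_pred j''_def[symmetric] j'_def[symmetric] using c
    by (simp add: field_simps)
  also have "\<dots> = (if j = 0 then real d - real s else 0) + (if j' = 0 then real s else 0)"
    unfolding z z' by simp
  finally show ?thesis
    using c unfolding j'_def[symmetric] j1_def[symmetric] by (simp add: field_simps)
qed

lemma rim_green_glue: "s \<le> d \<Longrightarrow> d > 0 \<Longrightarrow> rim_green m d c q s j d = rim_green m d c q s ((j + 1) mod m) 0"
  by (simp add: rim_green_def tent_right_end)

lemma rim_green_interior:
  assumes c: "c > 0" and t: "0 < t" "t < d" and s: "s < d"
  shows "2 * c * rim_green m d c q s j t - c * rim_green m d c q s j (t - 1)
      - c * rim_green m d c q s j (t + 1) = (if j = 0 \<and> t = s then 1 else 0)"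
proof -
  have "real (t - 1) = real t - 1" using t by simp
  then have "2 * c * rim_green m d c q s j t - c * rim_green m d c q s j (t - 1)
      - c * rim_green m d c q s j (t + 1)
    = (if j = 0 then 1 else 0) * (c * (2 * tent d c s t - tent d c s (t - 1) - tent d c s (t + 1)))"
    using t by (simp add: rim_green_def field_simps)
  then show ?thesis unfolding tent_interior[OF c t s] by simp
qed

lemma rim_green_spoke:
  assumes m: "m \<ge> 2" and q: "q > 1" and c: "c > 0" and j: "j < m" and s: "s < d"
    and a: "a = 2 * (q - 1) * c / real d"
  shows "(2 * c + a) * rim_green m d c q s j 0 - c * rim_green m d c q s ((j + m - 1) mod m) (d - 1)
      - c * rim_green m d c q s j 1 = (if j = 0 \<and> s = 0 then 1 else 0)"
proof -
  define j' where "j' = (j + m - 1) mod m"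
  let ?Y = "spoke_green m d c q s"
  have d: "real d > 0" "real (d - 1) = real d - 1" using s by auto
  have "(2 * c + a) * rim_green m d c q s j 0 - c * rim_green m d c q s j' (d - 1)
      - c * rim_green m d c q s j 1
    = c / real d * (2 * q * ?Y j - ?Y j' - ?Y ((j + 1) mod m))
      - c * (if j = 0 then tent d c s 1 else 0) - c * (if j' = 0 then tent d c s (d - 1) else 0)"
    using d mod_succ_pred(1)[OF j] unfolding rim_green_def a j'_def by (simp add: field_simps)
  also have "\<dots> = (if j = 0 \<and> s = 0 then 1 else 0)"
  proof -
    have Y: "2 * q * ?Y j - ?Y j' - ?Y ((j + 1) mod m)
        = ((if j = 0 then real d - real s else 0) + (if j' = 0 then real s else 0)) / c"
      using spoke_green_eq[OF m q j] c unfolding j'_def by simp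
    consider "j = 0" | "j \<noteq> 0" "j' = 0" | "j \<noteq> 0" "j' \<noteq> 0" by blast
    then show ?thesis
    proof cases
      case 1
      then have "j' \<noteq> 0" using m by (simp add: j'_def)
      then show ?thesis using 1 tent_1[OF c s] c d unfolding Y by (auto simp: field_simps)
    next
      case 2
      then show ?thesis using tent_pred_right_end[OF c s] c d unfolding Y by (simp add: field_simps)
    next
      case 3
      then show ?thesis unfolding Y by simp
    qed
  qed
  finally show ?thesis unfolding j'_def .
qed

lemma rim_green_eq:
  assumes m: "m \<ge> 2" and d: "d \<ge> 1" and q: "q > 1" and c: "c > 0"
    and a: "a = 2 * (q - 1) * c / real d" and s: "s < d" and w: "w < m * d"
  shows "rim_laplacian m d a c (\<lambda>w. rim_green m d c q s (w div d) (w mod d)) w = (if w = s then 1 else 0)"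
proof -
  define j where "j = w div d"
  define t where "t = w mod d"
  have j: "j < m" using w d by (simp add: j_def less_mult_imp_div_less)
  have t: "t < d" using d by (simp add: t_def)
  have source: "w = s \<longleftrightarrow> j = 0 \<and> t = s"
  proof
    assume "w = s"
    then show "j = 0 \<and> t = s" using s by (simp add: j_def t_def)
  next
    assume "j = 0 \<and> t = s"
    then show "w = s" using div_mult_mod_eq[of w d] by (simp add: j_def t_def)
  qed
  have glue: "rim_green m d c q s i d = rim_green m d c q s ((i + 1) mod m) 0" for i
    using s by (simp add: rim_green_glue)
  have "rim_laplacian m d a c (\<lambda>w. rim_green m d c q s (w div d) (w mod d)) w =
    (if 0 < t
     then 2 * c * rim_green m d c q s j t - c * rim_green m d c q s j (t - 1) - c * rim_green m d c q s j (t + 1)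
     else (2 * c + a) * rim_green m d c q s j 0 - c * rim_green m d c q s ((j + m - 1) mod m) (d - 1)
       - c * rim_green m d c q s j 1)"
    unfolding j_def t_def using m
    by (intro rim_laplacian_blocks[where E = "rim_green m d c q s", OF _ d w glue]) simp
  also have "\<dots> = (if w = s then 1 else 0)"
    using rim_green_interior[OF c _ t s, of m q j] rim_green_spoke[OF m q c j s a] source by auto
  finally show ?thesis .
qed

section \<open>The grounded wheel\<close>

definition rim_potential :: "nat \<Rightarrow> real \<Rightarrow> real \<Rightarrow> nat \<Rightarrow> real" where
  "rim_potential d a c t = real d / a + real t * (real d - real t) / (2 * c)"

lemma rim_potential_eq:
  assumes m: "m \<ge> 1" and d: "d \<ge> 1" and a: "a > 0" and c: "c > 0" and w: "w < m * d"
  shows "rim_laplacian m d a c (\<lambda>w. rim_potential d a c (w mod d)) w = 1"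
proof -
  have "rim_laplacian m d a c (\<lambda>w. (\<lambda>j t. rim_potential d a c t) (w div d) (w mod d)) w = 1"
  proof (subst rim_laplacian_blocks[OF m d w])
    have "w mod d < d" using d by simp
    moreover have "real (w mod d - 1) = real (w mod d) - 1" if "w mod d > 0"
      using that by simp
    moreover have "real (d - 1) = real d - 1" using d by simp
    ultimately show "(if 0 < w mod d then 2 * c * rim_potential d a c (w mod d)
          - c * rim_potential d a c (w mod d - 1) - c * rim_potential d a c (w mod d + 1)
        else (2 * c + a) * rim_potential d a c 0 - c * rim_potential d a c (d - 1)
          - c * rim_potential d a c 1) = 1"
      using a c by (auto simp: rim_potential_def field_simps)
  qed (simp add: rim_potential_def)
  then show ?thesis by simp
qed

text \<open>Rotating the rim by a multiple of \<open>d\<close> is a symmetry of the grounded wheel, so the Green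
  function with source \<open>u\<close> is the one with source \<open>u mod d\<close> in block 0, rotated back.\<close>

definition wheel_green :: "nat \<Rightarrow> nat \<Rightarrow> real \<Rightarrow> real \<Rightarrow> nat \<Rightarrow> nat \<Rightarrow> real" where
  "wheel_green m d c q v u =
     (let w = (v + (m * d - u div d * d)) mod (m * d) in rim_green m d c q (u mod d) (w div d) (w mod d))"

lemma rotate_to_first_block:
  fixes m d u v :: nat
  assumes d: "d \<ge> 1" and v: "v < m * d" and u: "u < m * d"
  shows "(v + (m * d - u div d * d)) mod (m * d) = u mod d \<longleftrightarrow> v = u"
proof -
  have ud: "u div d * d \<le> u" by simp
  then have block: "u div d * d \<le> m * d" using u by linarith
  with ud have "u + (m * d - u div d * d) = u mod d + m * d"
    using div_mult_mod_eq[of u d] by linarith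
  moreover have "u mod d < m * d" using u by (meson le_less_trans mod_less_eq_dividend)
  ultimately have same: "(u + (m * d - u div d * d)) mod (m * d) = u mod d" by simp
  show ?thesis
  proof
    assume eq: "(v + (m * d - u div d * d)) mod (m * d) = u mod d"
    have e: "v + (m * d - u div d * d) + u div d * d = v + m * d"
      using block by linarith
    have "v = (v + (m * d - u div d * d) + u div d * d) mod (m * d)"
      unfolding e using v by simp
    also have "\<dots> = ((v + (m * d - u div d * d)) mod (m * d) + u div d * d) mod (m * d)"
      by (simp only: mod_add_left_eq)
    also have "\<dots> = u"
      using eq u by simp
    finally show "v = u" .
  qed (use same in simp)
qed

lemma wheel_green_diag:
  assumes "d \<ge> 1" and "u < m * d"
  shows "wheel_green m d c q u u = rim_green m d c q (u mod d) 0 (u mod d)"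
  using rotate_to_first_block[OF assms assms(2)] by (simp add: wheel_green_def Let_def)

lemma wheel_green_inverse:
  assumes m: "m \<ge> 2" and d: "d \<ge> 1" and n: "m * d \<ge> 3" and q: "q > 1" and c: "c > 0"
    and a: "a = 2 * (q - 1) * c / real d" and i: "i \<in> {1..m*d}" and j: "j \<in> {1..m*d}"
  shows "(\<Sum>k\<in>{1..m*d}. laplacian (m*d+1) (wheel_cond m d a c) i k * wheel_green m d c q (k - 1) (j - 1))
    = (if i = j then 1 else 0)"
proof -
  define u where "u = j - 1"
  define r where "r = m * d - u div d * d"
  have u: "u < m * d" and v: "i - 1 < m * d" using i j by (auto simp: u_def)
  have r: "d dvd r" by (simp add: r_def flip: diff_mult_distrib)
  let ?F = "\<lambda>w. rim_green m d c q (u mod d) (w div d) (w mod d)"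
  have "(\<Sum>k\<in>{1..m*d}. laplacian (m*d+1) (wheel_cond m d a c) i k * wheel_green m d c q (k - 1) u)
      = rim_laplacian m d a c (\<lambda>w. ?F ((w + r) mod (m * d))) (i - 1)"
    using wheel_laplacian_row[OF n d i] by (simp add: wheel_green_def r_def Let_def)
  also have "\<dots> = rim_laplacian m d a c ?F ((i - 1 + r) mod (m * d))"
    by (rule rim_laplacian_rotate[OF r])
  also have "\<dots> = (if (i - 1 + r) mod (m * d) = u mod d then 1 else 0)"
  proof (rule rim_green_eq[OF m d q c a])
    show "u mod d < d" using d by simp
    show "(i - 1 + r) mod (m * d) < m * d" using n by (intro mod_less_divisor) linarith
  qed
  also have "\<dots> = (if i = j then 1 else 0)"
    using rotate_to_first_block[OF d v u] i j by (auto simp: r_def u_def)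
  finally show ?thesis unfolding u_def .
qed

lemma wheel_potential:
  assumes m: "m \<ge> 2" and d: "d \<ge> 1" and n: "m * d \<ge> 3" and a: "a > 0" and c: "c > 0"
    and i: "i \<in> {1..m*d}"
  shows "(\<Sum>k\<in>{1..m*d}. laplacian (m*d+1) (wheel_cond m d a c) i k * rim_potential d a c ((k - 1) mod d)) = 1"
  using wheel_laplacian_row[OF n d i] rim_potential_eq[of m d a c "i - 1"] m d a c i by auto

lemma sum_mod_blocks:
  fixes f :: "nat \<Rightarrow> real"
  shows "(\<Sum>u<m*d. f (u mod d)) = real m * (\<Sum>s<d. f s)"
proof -
  have "(\<Sum>u<m*d. f (u mod d)) = (\<Sum>j<m. \<Sum>u\<in>{j*d..<j*d+d}. f (u mod d))"
    by (rule sum.nat_group[symmetric])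
  also have "\<dots> = (\<Sum>j<m. \<Sum>s<d. f s)"
  proof (rule sum.cong[OF refl])
    fix j
    have "(\<Sum>u\<in>{j*d..<j*d+d}. f (u mod d)) = (\<Sum>u\<in>{0+j*d..<d+j*d}. f (u mod d))"
      by (simp add: add.commute)
    also have "\<dots> = (\<Sum>s\<in>{0..<d}. f ((s + j*d) mod d))"
      by (rule sum.shift_bounds_nat_ivl)
    finally show "(\<Sum>u\<in>{j*d..<j*d+d}. f (u mod d)) = (\<Sum>s<d. f s)"
      by (simp add: atLeast0LessThan)
  qed
  finally show ?thesis by simp
qed

lemma sum_quadratic:
  "(\<Sum>s<d. b0 + b1 * real s + b2 * (real s)^2) =
    real d * b0 + b1 * (real d * (real d - 1) / 2) + b2 * (real d * (real d - 1) * (2 * real d - 1) / 6)"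
  by (induction d) (auto simp: field_simps power2_eq_square)

lemma rim_green_diag:
  assumes m: "m \<ge> 2" and c: "c \<noteq> 0" and s: "s < d"
  shows "rim_green m d c q s 0 s = cycle_green m q 0 * real d / c
     + (2 * (cycle_green m q 1 - cycle_green m q 0) + 1) / c * real s
     + (2 * (cycle_green m q 0 - cycle_green m q 1) - 1) / (c * real d) * (real s)^2"
proof -
  have "(0 + m - 1) mod m = m - 1" "(0 + 1) mod m = 1" "(1 + m - 1) mod m = 0"
    using m by auto
  moreover have "cycle_green m q (m - 1) = cycle_green m q 1"
    using cycle_green_sym[of 1 m q] m by simp
  moreover have "real d > 0" using s by simp
  ultimately show ?thesis
    using c by (simp add: rim_green_def spoke_green_def tent_def field_simps power2_eq_square)
qed

lemma sum_rim_green_diag: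
  assumes m: "m \<ge> 2" and q: "q > 1" and c: "c \<noteq> 0" and d: "d \<ge> 1"
  shows "(\<Sum>s<d. rim_green m d c q s 0 s) =
    chebU (m - 1) q * ((q + 2) * (real d)^2 + 1 - q) / (6 * c * (chebT m q - 1))"
proof -
  obtain k where mk: "m = Suc (Suc k)" using m by (metis add_2_eq_Suc le_Suc_ex)
  define D where "D = 2 * (chebT m q - 1)"
  have D: "D \<noteq> 0" using chebT_gt_1[OF q, of m] m by (simp add: D_def)
  have Z0: "cycle_green m q 0 = chebU (Suc k) q / D"
    by (simp add: cycle_green_def D_def mk chebU_shift_def)
  have Z1: "cycle_green m q 1 = (chebU k q + 1) / D"
    by (simp add: cycle_green_def D_def mk chebU_shift_def)
  have U: "chebU k q = q * chebU (Suc k) q - 1 - D / 2"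
    using chebT_eq_chebU[of k q] by (simp add: D_def mk field_simps)
  have "(\<Sum>s<d. rim_green m d c q s 0 s) = (\<Sum>s<d. cycle_green m q 0 * real d / c
     + (2 * (cycle_green m q 1 - cycle_green m q 0) + 1) / c * real s
     + (2 * (cycle_green m q 0 - cycle_green m q 1) - 1) / (c * real d) * (real s)^2)"
    using rim_green_diag[OF m c] by simp
  also have "\<dots> = chebU (Suc k) q * ((q + 2) * (real d)^2 + 1 - q) / (3 * c * D)"
    unfolding sum_quadratic Z0 Z1 U using D c d by (simp add: field_simps power2_eq_square)
  finally show ?thesis by (simp add: mk D_def)
qed

lemma sum_rim_potential:
  assumes "a \<noteq> 0" and "c \<noteq> 0"
  shows "(\<Sum>t<d. rim_potential d a c t) = (real d)^2 / a + real d * ((real d)^2 - 1) / (12 * c)"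
proof -
  have "(\<Sum>t<d. rim_potential d a c t)
      = (\<Sum>t<d. real d / a + real d / (2 * c) * real t + (- 1 / (2 * c)) * (real t)^2)"
    by (rule sum.cong[OF refl]) (simp add: rim_potential_def power2_eq_square algebra_simps diff_divide_distrib)
  also have "\<dots> = (real d)^2 / a + real d * ((real d)^2 - 1) / (12 * c)"
    unfolding sum_quadratic using assms by (simp add: field_simps power2_eq_square)
  finally show ?thesis .
qed

lemma kirchhoff_index_wheel:
  assumes m: "m \<ge> 2" and d: "d \<ge> 1" and n: "m * d \<ge> 3" and a: "a > 0" and c: "c > 0"
    and q: "q > 1" and aq: "a = 2 * (q - 1) * c / real d"
  shows "kirchhoff_index (m * d + 1) (wheel_cond m d a c) =
    real (m * d + 1) * (real m * (\<Sum>s<d. rim_green m d c q s 0 s)) - real m * (\<Sum>t<d. rim_potential d a c t)"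
proof -
  interpret grounded_inverse "m * d" "wheel_cond m d a c" "\<lambda>i j. wheel_green m d c q (i - 1) (j - 1)"
  proof unfold_locales
    show "wheel_cond m d a c i j = wheel_cond m d a c j i" for i j
      by (rule wheel_cond_sym)
    show "(\<Sum>k\<in>{1..m * d}. laplacian (m * d + 1) (wheel_cond m d a c) i k * wheel_green m d c q (k - 1) (j - 1))
        = (if i = j then 1 else 0)" if "i \<in> {1..m * d}" "j \<in> {1..m * d}" for i j
      using that by (rule wheel_green_inverse[OF m d n q c aq])
  qed
  have "(\<Sum>i\<in>{1..m * d}. wheel_green m d c q (i - 1) (i - 1))
      = (\<Sum>u<m * d. rim_green m d c q (u mod d) 0 (u mod d))"
    using d by (simp add: sum.atLeast1_atMost_eq wheel_green_diag)
  also have "\<dots> = real m * (\<Sum>s<d. rim_green m d c q s 0 s)"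
    by (rule sum_mod_blocks)
  finally have trace: "(\<Sum>i\<in>{1..m * d}. wheel_green m d c q (i - 1) (i - 1))
      = real m * (\<Sum>s<d. rim_green m d c q s 0 s)" .
  have "(\<Sum>i\<in>{1..m * d}. rim_potential d a c ((i - 1) mod d)) = real m * (\<Sum>t<d. rim_potential d a c t)"
    by (simp add: sum.atLeast1_atMost_eq sum_mod_blocks)
  then show ?thesis
    using kirchhoff_index_grounded sum_grounded_inverse[OF wheel_potential[OF m d n a c]] trace
    by simp
qed


lemma wheel_kirchhoff_algebra:
  fixes a c q U W :: real and m d :: nat
  assumes a: "a \<noteq> 0" and c: "c \<noteq> 0" and W: "W \<noteq> 0"
    and q: "q = a * real d / (2 * c) + 1"
  shows "(real (m * d) + 1) * (real m * (U * ((q + 2) * (real d)^2 + 1 - q) / (6 * c * W)))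
      - real m * ((real d)^2 / a + real d * ((real d)^2 - 1) / (12 * c))
    = - (1 / (2 * c)) * ((real (m * d) + 1) / W) *
      ((a * real (m * d) / (6 * c) - real d * real (m * d) + (real d)^2) * U
       + (2 * c * real d / a + real d * real (m * d) / 3) * (W - (q - 1) * U))
    + real d / a + real d * real (m * d) * (real (m * d) + 1) / (6 * c)
    - ((real d)^2 - 1) * real (m * d) / (12 * c)"
  using a c W unfolding q by (simp add: field_simps power2_eq_square)

theorem proposition3p1:
  fixes m d :: nat and a c :: real
  assumes "m \<ge> 2" and "d \<ge> 1" and "m * d \<ge> 3" and "a > 0" and "c > 0"
  defines "n \<equiv> m * d"
  defines "q \<equiv> a * real d / (2 * c) + 1"
  shows "kirchhoff_index (n + 1) (wheel_cond m d a c) =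
    - (1 / (2 * c)) * ((real n + 1) / (chebT m q - 1)) *
      ((a * real n / (6 * c) - real d * real n + (real d)^2) * chebU (m - 1) q
       + (2 * c * real d / a + real d * real n / 3) * (chebV (m - 1) q - 1))
    + real d / a + real d * real n * (real n + 1) / (6 * c)
    - ((real d)^2 - 1) * real n / (12 * c)"
proof -
  have q: "q > 1" and aq: "a = 2 * (q - 1) * c / real d"
    using assms by (simp_all add: q_def field_simps)
  have a: "a \<noteq> 0" and c: "c \<noteq> 0"
    using assms by auto
  have T: "chebT m q - 1 \<noteq> 0"
    using chebT_gt_1[OF q, of m] \<open>m \<ge> 2\<close> by simp
  have V: "chebV (m - 1) q - 1 = (chebT m q - 1) - (q - 1) * chebU (m - 1) q"
    using chebV_eq_chebT_chebU[of "m - 1" q] \<open>m \<ge> 2\<close> by (simp add: Suc_diff_Suc numeral_2_eq_2)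
  have "kirchhoff_index (n + 1) (wheel_cond m d a c)
      = (real (m * d) + 1) * (real m * (chebU (m - 1) q * ((q + 2) * (real d)^2 + 1 - q)
          / (6 * c * (chebT m q - 1))))
        - real m * ((real d)^2 / a + real d * ((real d)^2 - 1) / (12 * c))"
    using kirchhoff_index_wheel[OF assms(1-5) q aq] unfolding n_def
    by (simp add: sum_rim_green_diag[OF assms(1) q c assms(2)] sum_rim_potential[OF a c])
  then show ?thesis
    unfolding V n_def
    using wheel_kirchhoff_algebra[OF a c T q_def[THEN meta_eq_to_obj_eq], where U = "chebU (m - 1) q" and m = m]
    by simp
qed

end
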